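(* Let $\mathbb{K}$ be a field and $s\geq 3$ an integer. Let $f=\sum_{i=0}^n a_ix_s^i\in\mathbb{K}[x_1,\ldots,x_s]$ with $n\geq 2$, $a_0,\ldots,a_n\in\mathbb{K}[x_1,\ldots,x_{s-1}]$, $a_0a_n\neq 0$. Assume that $f$ has no nonconstant factor in $\mathbb{K}[x_1,\ldots,x_{s-1}]$. If there exists an index $j$ with $0\leq j\leq n-1$ such that $$\deg_{s-1}a_j>\max_{i\neq j}\{\deg_{s-1}a_i+(j-i)\deg_{s-1}a_n\},$$ then $f$ is a product of at most $n-j$ irreducible polynomials over $\mathbb{K}[x_1,\ldots,x_{s-1}]$. In particular, if $j=n-1$, then $f$ is irreducible over $\mathbb{K}[x_1,\ldots,x_{s-1}]$.
   Context: For a polynomial $g\in\mathbb{K}[x_1,\ldots,x_r]$, $\deg_r g$ denotes the degree of $g$ viewed as a polynomial in $x_r$ with coefficients in $\mathbb{K}[x_1,\ldots,x_{r-1}]$. $f$ is regarded as a polynomial in $x_s$ with coefficients in $\mathbb{K}[x_1,\ldots,x_{s-1}]$, and "a product of at most $k$ irreducible polynomials over $\mathbb{K}[x_1,\ldots,x_{s-1}]$" means that its factorization into irreducibles of $\mathbb{K}[x_1,\ldots,x_{s-1}][x_s]$ has at most $k$ factors counted with multiplicities. *)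

theory Defs
  imports "HOL-Computational_Algebra.Polynomial" "HOL-Library.Poly_Mapping"
          "HOL-Computational_Algebra.Factorial_Ring"
begin

(* K[x_1,...,x_m] (m = CARD('v) \<ge> 1): monomials are exponent maps 'v to nat (finite support).
  K[x_1,...,x_{s-1}] is modelled as (K[x_1,...,x_{s-2}])[x_{s-1}], i.e. type 'v mpoly' poly,
  and K[x_1,...,x_s] as ('k,'v) mpoly' poly poly (outer variable x_s). *)

type_synonym ('k, 'v) mpoly' = "('v \<Rightarrow>\<^sub>0 nat) \<Rightarrow>\<^sub>0 'k"

definition const_D :: "'k::zero \<Rightarrow> ('k, 'v) mpoly' poly" where
  "const_D c = [: Poly_Mapping.single 0 c :]"

end

theory Submission
  imports Defs
begin

text \<open>Weight the coefficient of \<open>x\<^sub>s\<^sup>i\<close> by \<open>deg\<^sub>s\<^sub>-\<^sub>1 a\<^sub>i - i D\<close> with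
  \<open>D = deg\<^sub>s\<^sub>-\<^sub>1 a\<^sub>n\<close>. The hypothesis says that \<open>f\<close> attains its maximal weight at the
  single index \<open>j\<close>. Maximal weights add under multiplication, and so do the largest and the
  smallest indices where they are attained; hence every factor \<open>g\<close> of \<open>f\<close> again attains its
  maximal weight at a single index \<open>k\<close>, and these indices add up to \<open>j\<close>. As the constant
  coefficient of \<open>g\<close> is nonzero and its leading coefficient has degree at most \<open>D\<close>, we get
  \<open>k < deg\<^sub>s g\<close>. Every nonunit factor has positive degree in \<open>x\<^sub>s\<close>, so each irreducible
  factor contributes at least one to \<open>n - j\<close>.\<close>

definition weight :: "nat \<Rightarrow> 'a::zero poly poly \<Rightarrow> nat \<Rightarrow> int" where
  "weight D g i = int (degree (coeff g i)) - int i * int D"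

definition max_weight :: "nat \<Rightarrow> 'a::zero poly poly \<Rightarrow> int" where
  "max_weight D g = Max (weight D g ` {i. coeff g i \<noteq> 0})"

definition initial_support :: "nat \<Rightarrow> 'a::zero poly poly \<Rightarrow> nat set" where
  "initial_support D g = {i. coeff g i \<noteq> 0 \<and> weight D g i = max_weight D g}"

lemma finite_nonzero_coeffs: "finite {i. coeff p i \<noteq> 0}"
  using MOST_coeff_eq_0[of p] by (simp add: MOST_iff_cofinite)

lemma weight_le_max_weight: "coeff g i \<noteq> 0 \<Longrightarrow> weight D g i \<le> max_weight D g"
  unfolding max_weight_def by (auto intro: Max_ge finite_nonzero_coeffs)

lemma max_weight_attained:
  assumes "g \<noteq> 0"
  obtains i where "coeff g i \<noteq> 0" "weight D g i = max_weight D g"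
proof -
  have "{i. coeff g i \<noteq> 0} \<noteq> {}" using assms by (auto simp: poly_eq_iff)
  then have "max_weight D g \<in> weight D g ` {i. coeff g i \<noteq> 0}"
    unfolding max_weight_def by (simp add: finite_nonzero_coeffs)
  then show ?thesis using that by auto
qed

lemma finite_initial_support: "finite (initial_support D g)"
  unfolding initial_support_def by (rule finite_subset[OF _ finite_nonzero_coeffs]) auto

lemma initial_support_nonempty:
  assumes "g \<noteq> 0"
  shows "initial_support D g \<noteq> {}"
proof -
  obtain i where "coeff g i \<noteq> 0" "weight D g i = max_weight D g"
    using max_weight_attained[OF assms] .
  then show ?thesis by (auto simp: initial_support_def)
qed

lemma initial_support_eq_singletonI:
  assumes "coeff g k \<noteq> 0"
    and "\<And>i. i \<noteq> k \<Longrightarrow> coeff g i \<noteq> 0 \<Longrightarrow> weight D g i < weight D g k"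
  shows "initial_support D g = {k}"
proof -
  have "g \<noteq> 0" using assms(1) by auto
  then obtain i where i: "coeff g i \<noteq> 0" "weight D g i = max_weight D g"
    by (rule max_weight_attained)
  have "weight D g i \<le> weight D g k" using assms(2)[of i] i(1) by (cases "i = k") auto
  then have "weight D g k = max_weight D g"
    using weight_le_max_weight[OF assms(1), of D] i(2) by linarith
  then show ?thesis
    using assms unfolding initial_support_def by fastforce
qed

lemma degree_coeff_mult_term:
  fixes a b :: "'a::idom poly poly"
  assumes "coeff a i \<noteq> 0" "coeff b l \<noteq> 0"
  shows "int (degree (coeff a i * coeff b l)) = weight D a i + weight D b l + int (i + l) * int D"
  using assms by (simp add: degree_mult_eq weight_def algebra_simps)

lemma sum_eq_0_or_degree_less:
  assumes "finite S" "\<And>i. i \<in> S \<Longrightarrow> t i = 0 \<or> degree (t i) < n"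
  shows "sum t S = 0 \<or> degree (sum t S) < n"
proof (cases "n = 0")
  case True
  then show ?thesis using assms(2) by simp
next
  case False
  then have "degree (sum t S) < n"
    using assms(2) by (intro degree_sum_less) (auto, metis degree_0)
  then show ?thesis ..
qed

lemma weight_mult_le:
  fixes a b :: "'a::idom poly poly"
  assumes "coeff (a * b) k \<noteq> 0"
  shows "weight D (a * b) k \<le> max_weight D a + max_weight D b"
proof (rule ccontr)
  define M where "M = degree (coeff (a * b) k)"
  assume "\<not> ?thesis"
  then have M: "int M > max_weight D a + max_weight D b + int k * int D"
    unfolding M_def weight_def by simp
  have "coeff a i * coeff b (k - i) = 0 \<or> degree (coeff a i * coeff b (k - i)) < M"
    if "i \<in> {..k}" for i
    using that M degree_coeff_mult_term[of a i b "k - i" D]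
      weight_le_max_weight[of a i D] weight_le_max_weight[of b "k - i" D]
    by (cases "coeff a i = 0 \<or> coeff b (k - i) = 0") auto
  then have "coeff (a * b) k = 0 \<or> degree (coeff (a * b) k) < M"
    unfolding coeff_mult by (intro sum_eq_0_or_degree_less) auto
  then show False using assms M_def by simp
qed

text \<open>The uniqueness hypothesis holds for the pairs of largest and of smallest indices.\<close>

lemma coeff_mult_initial:
  fixes a b :: "'a::idom poly poly"
  assumes ka: "ka \<in> initial_support D a" and kb: "kb \<in> initial_support D b"
    and unique: "\<And>i l. i \<in> initial_support D a \<Longrightarrow> l \<in> initial_support D b \<Longrightarrow>
      i + l = ka + kb \<Longrightarrow> i = ka"
  shows "coeff (a * b) (ka + kb) \<noteq> 0"
    and "weight D (a * b) (ka + kb) = max_weight D a + max_weight D b"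
proof -
  define K where "K = ka + kb"
  define t where "t i = coeff a i * coeff b (K - i)" for i
  define N where "N = degree (t ka)"
  have nz: "coeff a ka \<noteq> 0" "coeff b kb \<noteq> 0" using ka kb by (auto simp: initial_support_def)
  have N: "int N = max_weight D a + max_weight D b + int K * int D"
    using degree_coeff_mult_term[OF nz, of D] ka kb
    by (simp add: N_def t_def K_def initial_support_def)
  have lower: "t i = 0 \<or> degree (t i) < N" if "i \<in> {..K} - {ka}" for i
  proof (cases "t i = 0")
    case False
    then have nzi: "coeff a i \<noteq> 0" "coeff b (K - i) \<noteq> 0" by (auto simp: t_def)
    have "weight D a i + weight D b (K - i) < max_weight D a + max_weight D b"
      using unique[of i "K - i"] that nzi weight_le_max_weight[of a i D]
        weight_le_max_weight[of b "K - i" D]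
      by (force simp: initial_support_def K_def)
    then show ?thesis
      using degree_coeff_mult_term[OF nzi, of D] that N by (simp add: t_def K_def)
  qed simp
  have split: "coeff (a * b) K = t ka + (\<Sum>i\<in>{..K} - {ka}. t i)"
    unfolding coeff_mult t_def by (subst sum.remove[of _ ka]) (auto simp: K_def)
  have rest: "(\<Sum>i\<in>{..K} - {ka}. t i) = 0 \<or> degree (\<Sum>i\<in>{..K} - {ka}. t i) < N"
    using lower by (intro sum_eq_0_or_degree_less) auto
  have "t ka \<noteq> 0" using nz by (simp add: t_def K_def)
  then have "coeff (coeff (a * b) K) N \<noteq> 0" and "degree (coeff (a * b) K) = N"
    using rest by (auto simp: split N_def coeff_eq_0 degree_add_eq_left)
  then show "coeff (a * b) (ka + kb) \<noteq> 0"
    and "weight D (a * b) (ka + kb) = max_weight D a + max_weight D b"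
    using N by (auto simp: weight_def K_def)
qed

lemma max_weight_mult:
  fixes a b :: "'a::idom poly poly"
  assumes "a \<noteq> 0" "b \<noteq> 0"
  shows "max_weight D (a * b) = max_weight D a + max_weight D b"
proof (rule antisym)
  define ka where "ka = Max (initial_support D a)"
  define kb where "kb = Max (initial_support D b)"
  have ka: "ka \<in> initial_support D a" and kb: "kb \<in> initial_support D b"
    using assms by (simp_all add: ka_def kb_def finite_initial_support initial_support_nonempty)
  have unique: "i = ka"
    if "i \<in> initial_support D a" "l \<in> initial_support D b" "i + l = ka + kb" for i l
  proof -
    have "i \<le> ka" "l \<le> kb"
      unfolding ka_def kb_def using that(1,2) by (simp_all add: finite_initial_support)
    then show ?thesis using that(3) by linarith
  qed
  show "max_weight D a + max_weight D b \<le> max_weight D (a * b)"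
    using coeff_mult_initial[OF ka kb unique] weight_le_max_weight[of "a * b" "ka + kb" D]
    by simp
  have "a * b \<noteq> 0" using assms by simp
  then obtain k where "coeff (a * b) k \<noteq> 0" "weight D (a * b) k = max_weight D (a * b)"
    by (rule max_weight_attained)
  then show "max_weight D (a * b) \<le> max_weight D a + max_weight D b"
    using weight_mult_le[of a b k D] by simp
qed

lemma add_mem_initial_support_mult:
  fixes a b :: "'a::idom poly poly"
  assumes "ka \<in> initial_support D a" "kb \<in> initial_support D b"
    and "\<And>i l. i \<in> initial_support D a \<Longrightarrow> l \<in> initial_support D b \<Longrightarrow>
      i + l = ka + kb \<Longrightarrow> i = ka"
  shows "ka + kb \<in> initial_support D (a * b)"
proof -
  have "a \<noteq> 0" "b \<noteq> 0" using assms(1,2) by (auto simp: initial_support_def)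
  then show ?thesis
    using coeff_mult_initial[OF assms] by (simp add: initial_support_def max_weight_mult)
qed

lemma eq_singleton_if_Min_eq_Max:
  fixes A :: "'a::linorder set"
  assumes "finite A" "A \<noteq> {}" "Min A = Max A"
  shows "A = {Max A}"
proof -
  have "x = Max A" if "x \<in> A" for x
  proof -
    have "Min A \<le> x" "x \<le> Max A" using that assms(1) by simp_all
    then show ?thesis using assms(3) by simp
  qed
  then show ?thesis using Max_in[OF assms(1,2)] by blast
qed

lemma initial_support_mult_singleton:
  fixes a b :: "'a::idom poly poly"
  assumes "initial_support D (a * b) = {k}"
  obtains ka kb where "ka + kb = k" "initial_support D a = {ka}" "initial_support D b = {kb}"
proof -
  let ?Sa = "initial_support D a" and ?Sb = "initial_support D b"
  have "a \<noteq> 0" "b \<noteq> 0" using assms by (auto simp: initial_support_def)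
  then have ne: "?Sa \<noteq> {}" "?Sb \<noteq> {}" and fin: "finite ?Sa" "finite ?Sb"
    by (simp_all add: initial_support_nonempty finite_initial_support)
  have "Max ?Sa + Max ?Sb \<in> initial_support D (a * b)"
  proof (rule add_mem_initial_support_mult)
    show "Max ?Sa \<in> ?Sa" "Max ?Sb \<in> ?Sb" using fin ne by simp_all
    fix i l assume "i \<in> ?Sa" "l \<in> ?Sb" "i + l = Max ?Sa + Max ?Sb"
    moreover have "i \<le> Max ?Sa" "l \<le> Max ?Sb" using calculation fin by simp_all
    ultimately show "i = Max ?Sa" by linarith
  qed
  moreover have "Min ?Sa + Min ?Sb \<in> initial_support D (a * b)"
  proof (rule add_mem_initial_support_mult)
    show "Min ?Sa \<in> ?Sa" "Min ?Sb \<in> ?Sb" using fin ne by simp_all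
    fix i l assume "i \<in> ?Sa" "l \<in> ?Sb" "i + l = Min ?Sa + Min ?Sb"
    moreover have "Min ?Sa \<le> i" "Min ?Sb \<le> l" using calculation fin by simp_all
    ultimately show "i = Min ?Sa" by linarith
  qed
  moreover have "Min ?Sa \<le> Max ?Sa" "Min ?Sb \<le> Max ?Sb" using fin ne by simp_all
  ultimately have "Min ?Sa = Max ?Sa" "Min ?Sb = Max ?Sb" "Max ?Sa + Max ?Sb = k"
    using assms by auto
  then show ?thesis
    using that fin ne eq_singleton_if_Min_eq_Max by metis
qed

lemma initial_support_le_degree: "i \<in> initial_support D g \<Longrightarrow> i \<le> degree g"
  by (simp add: initial_support_def le_degree)

lemma initial_index_less_degree:
  assumes "initial_support D g = {k}" and "coeff g 0 \<noteq> 0"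
    and "degree (lead_coeff g) \<le> D" and "degree g > 0"
  shows "k < degree g"
proof -
  have "k \<noteq> degree g"
  proof
    assume k: "k = degree g"
    have "D \<le> degree g * D" using assms(4) by simp
    then have "int D \<le> int (degree g) * int D" by (metis of_nat_le_iff of_nat_mult)
    then have "weight D g k \<le> weight D g 0" using k assms(3) by (simp add: weight_def)
    moreover have "weight D g k = max_weight D g" using assms(1) by (auto simp: initial_support_def)
    ultimately have "0 \<in> initial_support D g"
      using assms(2) weight_le_max_weight[OF assms(2), of D] by (simp add: initial_support_def)
    then show False using assms(1,4) k by simp
  qed
  moreover have "k \<le> degree g" using assms(1) initial_support_le_degree by blast
  ultimately show ?thesis by simp
qed

lemma coeff_0_dvd_coeff_0: "p dvd q \<Longrightarrow> coeff p 0 dvd coeff q 0"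
  by (auto elim!: dvdE simp: coeff_mult_0)

lemma degree_lead_coeff_le_of_dvd:
  fixes f g :: "'a::idom poly poly"
  assumes "g dvd f" "f \<noteq> 0"
  shows "degree (lead_coeff g) \<le> degree (lead_coeff f)"
proof -
  obtain h where f: "f = g * h" using assms(1) ..
  then have "lead_coeff f = lead_coeff g * lead_coeff h" by (simp add: lead_coeff_mult)
  with f assms(2) show ?thesis by (simp add: degree_mult_eq)
qed

lemma degree_pos_if_nonunit_dvd:
  fixes f p :: "'a::idom poly"
  assumes "\<And>c. [:c:] dvd f \<Longrightarrow> c dvd 1" and "p dvd f" and "\<not> p dvd 1"
  shows "degree p > 0"
proof (rule ccontr)
  assume "\<not> degree p > 0"
  then have p: "p = [:coeff p 0:]" by (simp add: degree_0_id)
  then have "coeff p 0 dvd 1" using assms(1,2) by metis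
  then show False using assms(3) p by (metis is_unit_const_poly_iff)
qed

lemma irreducible_factorization_length_le:
  fixes f g :: "'a::idom poly poly"
  assumes const_dvd: "\<And>c. [:c:] dvd f \<Longrightarrow> c dvd 1" and f0: "coeff f 0 \<noteq> 0"
    and D: "degree (lead_coeff f) \<le> D"
    and "g dvd f" and "degree g > 0" and "initial_support D g = {k}"
  shows "\<exists>fs. g = prod_list fs \<and> (\<forall>x\<in>set fs. irreducible x) \<and> length fs \<le> degree g - k"
  using assms(4-6)
proof (induction "degree g" arbitrary: g k rule: less_induct)
  case less
  have "f \<noteq> 0" using f0 by auto
  have "coeff g 0 \<noteq> 0" using coeff_0_dvd_coeff_0[OF less.prems(1)] f0 by auto
  moreover have "degree (lead_coeff g) \<le> D"
    using degree_lead_coeff_le_of_dvd[OF less.prems(1) \<open>f \<noteq> 0\<close>] D by simp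
  ultimately have "k < degree g"
    using initial_index_less_degree less.prems(2,3) by blast
  show ?case
  proof (cases "irreducible g")
    case True
    then show ?thesis using \<open>k < degree g\<close> by (intro exI[of _ "[g]"]) auto
  next
    case False
    have "g \<noteq> 0" "\<not> g dvd 1" using less.prems(2) by (auto simp: is_unit_poly_iff)
    then obtain a b where g: "g = a * b" and "\<not> a dvd 1" "\<not> b dvd 1"
      using False by (auto simp: irreducible_def)
    moreover have "a dvd f" "b dvd f" using g less.prems(1) dvd_mult_left dvd_mult_right by auto
    ultimately have "degree a > 0" "degree b > 0" using degree_pos_if_nonunit_dvd const_dvd by blast+
    have deg: "degree g = degree a + degree b" using g \<open>g \<noteq> 0\<close> by (simp add: degree_mult_eq)
    obtain ka kb where k: "ka + kb = k" "initial_support D a = {ka}" "initial_support D b = {kb}"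
      using initial_support_mult_singleton less.prems(3) g by metis
    obtain fa fb where
      fa: "a = prod_list fa" "\<forall>x\<in>set fa. irreducible x" "length fa \<le> degree a - ka" and
      fb: "b = prod_list fb" "\<forall>x\<in>set fb. irreducible x" "length fb \<le> degree b - kb"
      using less.hyps[OF _ \<open>a dvd f\<close> \<open>degree a > 0\<close> k(2)]
        less.hyps[OF _ \<open>b dvd f\<close> \<open>degree b > 0\<close> k(3)] deg \<open>degree a > 0\<close> \<open>degree b > 0\<close>
      by auto
    have "ka \<le> degree a" "kb \<le> degree b" using k initial_support_le_degree by blast+
    then have "length (fa @ fb) \<le> degree g - k" using fa(3) fb(3) deg k(1) by simp
    then show ?thesis using g fa fb by (intro exI[of _ "fa @ fb"]) auto
  qed
qed

lemma const_D_dvd_1: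
  fixes c :: "'k::field"
  assumes "c \<noteq> 0"
  shows "(const_D c :: ('k, 'v::linorder) mpoly' poly) dvd 1"
proof -
  have "Poly_Mapping.single 0 c * Poly_Mapping.single 0 (inverse c) = (1 :: ('k, 'v) mpoly')"
    using assms by (simp add: mult_single)
  then have "Poly_Mapping.single 0 c dvd (1 :: ('k, 'v) mpoly')" by (metis dvdI)
  then show ?thesis by (simp add: const_D_def is_unit_const_poly_iff)
qed

theorem theorem10:
  fixes f :: "('k::field, 'v::{finite,linorder}) mpoly' poly poly"
    and n j :: nat
  assumes "n = degree f" and "n \<ge> 2"
    and "coeff f 0 * coeff f n \<noteq> 0"
    and "\<forall>d. [:d:] dvd f \<longrightarrow> d \<in> range const_D"
    and "j \<le> n - 1"
    and "coeff f j \<noteq> 0"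
    and "\<forall>i\<le>n. i \<noteq> j \<and> coeff f i \<noteq> 0 \<longrightarrow>
           int (degree (coeff f j)) >
           int (degree (coeff f i)) + (int j - int i) * int (degree (coeff f n))"
  shows "\<exists>fs. f = prod_list fs \<and> (\<forall>g\<in>set fs. irreducible g) \<and> length fs \<le> n - j"
proof -
  define D where "D = degree (coeff f n)"
  have f0: "coeff f 0 \<noteq> 0" using assms(3) by auto
  have const_dvd: "c dvd 1" if "[:c:] dvd f" for c
  proof -
    have "c \<in> range const_D" using assms(4) that by blast
    then obtain x where c: "c = const_D x" by blast
    have "x \<noteq> 0" using c that f0 by (auto simp: const_D_def)
    then show ?thesis using c const_D_dvd_1 by blast
  qed
  have "initial_support D f = {j}"
  proof (rule initial_support_eq_singletonI[OF assms(6)])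
    fix i assume "i \<noteq> j" "coeff f i \<noteq> 0"
    moreover have "i \<le> n" using calculation(2) assms(1) le_degree by blast
    ultimately show "weight D f i < weight D f j"
      using assms(7) by (auto simp: weight_def D_def algebra_simps)
  qed
  moreover have "degree (lead_coeff f) \<le> D" "degree f > 0" using assms(1,2) D_def by auto
  ultimately show ?thesis
    using irreducible_factorization_length_le[of f D f j] const_dvd f0 assms(1) by auto
qed

end
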